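(* Let $\phi(x_1,\dots,x_k)$ be a non-trivial triple clause. Then there exist $l\ge 1$ and variables $y^i_j\in\{a,b,c\}$ ($1\le i\le l$, $1\le j\le k$) such that the rooted triple formula $\bigwedge_{i=1}^{l}\phi(y^i_1,\dots,y^i_k)$ is logically equivalent to $ab|c$, i.e., it is satisfied by exactly the same pairs $(T,\alpha)$ (with $\alpha$ defined on $\{a,b,c\}$) as the literal $ab|c$.
   Context: A rooted tree $T$ has a distinguished root $r$; leaves are vertices with exactly one neighbour; $u$ lies strictly below $v$ if the path from $u$ to $r$ passes through $v$ and $u\neq v$; $\mathrm{yca}(u,v)$ is the vertex of maximal distance from $r$ above both $u$ and $v$; $T$ is binary if the root has two neighbours and every other vertex three or one. A triple clause is a disjunction of literals $xy|z$. A literal $xy|z$ is satisfied by $(T,\alpha)$ ($T$ rooted binary, $\alpha$ maps variables to leaves) if $\alpha(x),\alpha(y),\alpha(z)$ are pairwise distinct and $\mathrm{yca}(\alpha(x),\alpha(y))$ lies strictly below $\mathrm{yca}(\alpha(x),\alpha(z))$; a clause is satisfied if one of its literals is. Convention: clauses contain no literals of the forms $xx|y$, $xy|x$, $xy|y$. A triple clause is trivial if it is satisfied by every injective map of its variables into the leaves of every rooted binary tree. *)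

theory Defs
  imports Main "HOL-Library.Sublist"
begin

text \<open>Rooted trees are represented concretely: vertices are addresses (bool lists),
  the root is the empty address, and a tree is a finite prefix-closed set of addresses.
  Every finite rooted tree in which each vertex has at most two children is isomorphic
  to such a set; rooted binary trees in particular.\<close>

definition rooted_tree :: "bool list set \<Rightarrow> bool" where
  "rooted_tree T \<longleftrightarrow> finite T \<and> [] \<in> T \<and> (\<forall>u\<in>T. \<forall>w. prefix w u \<longrightarrow> w \<in> T)"

definition nbrs :: "bool list set \<Rightarrow> bool list \<Rightarrow> bool list set" where
  "nbrs T u = {v \<in> T. \<exists>b. v = u @ [b] \<or> u = v @ [b]}"

definition is_leaf :: "bool list set \<Rightarrow> bool list \<Rightarrow> bool" where
  "is_leaf T u \<longleftrightarrow> u \<in> T \<and> card (nbrs T u) = 1"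

definition binary_tree :: "bool list set \<Rightarrow> bool" where
  "binary_tree T \<longleftrightarrow> rooted_tree T \<and> card (nbrs T []) = 2 \<and>
     (\<forall>u\<in>T - {[]}. card (nbrs T u) = 1 \<or> card (nbrs T u) = 3)"

text \<open>The path from u to the root passes through v iff v is a prefix of u.\<close>
definition strictly_below :: "bool list set \<Rightarrow> bool list \<Rightarrow> bool list \<Rightarrow> bool" where
  "strictly_below T u v \<longleftrightarrow> u \<in> T \<and> v \<in> T \<and> prefix v u \<and> u \<noteq> v"

definition yca :: "bool list set \<Rightarrow> bool list \<Rightarrow> bool list \<Rightarrow> bool list" where
  "yca T u v = (ARG_MAX length w. w \<in> T \<and> prefix w u \<and> prefix w v)"

type_synonym 'v literal = "'v \<times> 'v \<times> 'v"   \<comment> \<open>(x,y,z) stands for xy|z\<close>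
type_synonym 'v clause = "'v literal list"

definition sat_lit :: "bool list set \<Rightarrow> ('v \<Rightarrow> bool list) \<Rightarrow> 'v literal \<Rightarrow> bool" where
  "sat_lit T \<alpha> l = (case l of (x, y, z) \<Rightarrow>
     \<alpha> x \<noteq> \<alpha> y \<and> \<alpha> x \<noteq> \<alpha> z \<and> \<alpha> y \<noteq> \<alpha> z \<and>
     strictly_below T (yca T (\<alpha> x) (\<alpha> y)) (yca T (\<alpha> x) (\<alpha> z)))"

definition sat_clause :: "bool list set \<Rightarrow> ('v \<Rightarrow> bool list) \<Rightarrow> 'v clause \<Rightarrow> bool" where
  "sat_clause T \<alpha> C \<longleftrightarrow> (\<exists>l\<in>set C. sat_lit T \<alpha> l)"

definition clause_vars :: "'v clause \<Rightarrow> 'v set" where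
  "clause_vars C = (\<Union>(x, y, z)\<in>set C. {x, y, z})"

definition trivial_clause :: "'v clause \<Rightarrow> bool" where
  "trivial_clause C \<longleftrightarrow> (\<forall>T \<alpha>. binary_tree T \<longrightarrow> inj_on \<alpha> (clause_vars C) \<longrightarrow>
      (\<forall>x\<in>clause_vars C. is_leaf T (\<alpha> x)) \<longrightarrow> sat_clause T \<alpha> C)"

definition subst_clause :: "('v \<Rightarrow> 'w) \<Rightarrow> 'v clause \<Rightarrow> 'w clause" where
  "subst_clause \<sigma> C = map (\<lambda>(x, y, z). (\<sigma> x, \<sigma> y, \<sigma> z)) C"

datatype abc = A | B | C

end

theory Submission
  imports Defs
begin

text \<open>
  Addresses are bool lists and the youngest common ancestor of two vertices is
  their longest common prefix, so a literal xy|z holds exactly when the triple of leaf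
  addresses is resolved with outgroup z.  Since the tree is binary, any three leaves form
  exactly one resolved triple, i.e. for an assignment of A, B, C to leaves there is exactly
  one outgroup.

  Take a leaf assignment falsifying the non-trivial clause \<phi> and a literal xy|z of it.
  By trichotomy sz|t is resolved for {s,t} = {x,y}; let u be the vertex where s and z
  branch.  Labelling every variable by its position relative to u (clade of z: A, clade of
  s: B, elsewhere: C) gives a substitution \<sigma> such that every literal of \<sigma>(\<phi>) with distinct
  letters has outgroup A or B (outgroup C would make the original literal true), while
  xy|z becomes a literal {B,C}|A.  Relabelling by A\<mapsto>C, B\<mapsto>A and by A\<mapsto>C, B\<mapsto>B gives two
  clauses whose conjunction says "C is the outgroup", which is ab|c.
\<close>

text \<open>Longest common prefix of two addresses; in a tree of addresses it is the youngest
  common ancestor.\<close>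
abbreviation lcp :: "'a list \<Rightarrow> 'a list \<Rightarrow> 'a list" where
  "lcp \<equiv> longest_common_prefix"

lemma prefix_lcp_iff: "prefix w (lcp p q) \<longleftrightarrow> prefix w p \<and> prefix w q"
  using longest_common_prefix_prefix1 longest_common_prefix_prefix2
    longest_common_prefix_max_prefix prefix_order.trans by blast

lemma lcp_sym: "lcp p q = lcp q p"
  by (rule prefix_order.antisym)
     (simp_all add: prefix_lcp_iff longest_common_prefix_prefix1 longest_common_prefix_prefix2)

lemma lcp_append: "lcp (w @ p) (w @ q) = w @ lcp p q"
  by (induction w) auto

lemma lcp_split:
  fixes p q :: "bool list"
  assumes "\<not> prefix p q" "\<not> prefix q p"
  obtains c p' q' where "p = lcp p q @ c # p'" "q = lcp p q @ (\<not> c) # q'"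
proof -
  obtain p1 q1 where p1: "p = lcp p q @ p1" and q1: "q = lcp p q @ q1"
    using longest_common_prefix_prefix1 longest_common_prefix_prefix2 prefix_def by metis
  have "lcp p q @ lcp p1 q1 = lcp p q"
    using lcp_append[of "lcp p q" p1 q1] p1 q1 by simp
  then have no_common: "lcp p1 q1 = []" by simp
  obtain c p' where "p1 = c # p'"
    using p1 assms(1) longest_common_prefix_prefix2[of p q] by (cases p1) auto
  moreover obtain d q' where "q1 = d # q'"
    using q1 assms(2) longest_common_prefix_prefix1[of p q] by (cases q1) auto
  ultimately show thesis
    using that p1 q1 no_common by (auto split: if_splits)
qed

text \<open>resolved p q r is the rooted triple pq|r on addresses: the three are distinct and
  lcp p r lies strictly above lcp p q.\<close>
definition resolved :: "bool list \<Rightarrow> bool list \<Rightarrow> bool list \<Rightarrow> bool" where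
  "resolved p q r \<longleftrightarrow> p \<noteq> q \<and> p \<noteq> r \<and> q \<noteq> r \<and> strict_prefix (lcp p r) (lcp p q)"

lemma lcp_outgroup:
  assumes "strict_prefix (lcp p r) (lcp p q)"
  shows "lcp q r = lcp p r"
proof (rule prefix_order.antisym)
  have "prefix (lcp p r) q"
    using assms longest_common_prefix_prefix2 prefix_order.trans strict_prefix_def by metis
  then show "prefix (lcp p r) (lcp q r)"
    by (simp add: prefix_lcp_iff longest_common_prefix_prefix2)
next
  have "\<not> prefix (lcp p q) (lcp q r)"
  proof
    assume "prefix (lcp p q) (lcp q r)"
    then have "prefix (lcp p q) (lcp p r)"
      by (simp add: prefix_lcp_iff longest_common_prefix_prefix1)
    then show False using assms by (simp add: prefix_order.leD)
  qed
  then have "prefix (lcp q r) (lcp p q)"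
    using prefix_same_cases longest_common_prefix_prefix1 longest_common_prefix_prefix2 by metis
  then show "prefix (lcp q r) (lcp p r)"
    by (simp add: prefix_lcp_iff longest_common_prefix_prefix2)
qed

lemma resolved_swap: "resolved p q r \<longleftrightarrow> resolved q p r"
  using lcp_outgroup lcp_sym unfolding resolved_def by metis

lemma resolved_asym: "resolved p q r \<Longrightarrow> \<not> resolved p r q"
  unfolding resolved_def by (meson prefix_order.less_asym)

text \<open>Binary branching: among three pairwise incomparable addresses one of the three possible
  triples is resolved (no star tree on three leaves).\<close>
lemma resolved_trichotomy:
  fixes p q r :: "bool list"
  assumes "\<not> prefix p q" "\<not> prefix q p" "\<not> prefix p r" "\<not> prefix r p"
    and "\<not> prefix q r" "\<not> prefix r q"
  shows "resolved p q r \<or> resolved p r q \<or> resolved q r p"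
proof -
  have distinct: "p \<noteq> q" "p \<noteq> r" "q \<noteq> r" using assms by auto
  have "prefix (lcp p q) (lcp p r) \<or> prefix (lcp p r) (lcp p q)"
    using prefix_same_cases longest_common_prefix_prefix1 by blast
  then consider "strict_prefix (lcp p r) (lcp p q)" | "strict_prefix (lcp p q) (lcp p r)"
    | "lcp p q = lcp p r"
    unfolding strict_prefix_def by (cases "lcp p q = lcp p r") auto
  then show ?thesis
  proof cases
    case 3
    define u where "u = lcp p q"
    obtain c p' q' where "p = u @ c # p'" "q = u @ (\<not> c) # q'"
      unfolding u_def by (rule lcp_split[OF assms(1,2)])
    moreover obtain d p'' r' where "p = u @ d # p''" "r = u @ (\<not> d) # r'"
      using lcp_split[OF assms(3,4)] 3 unfolding u_def by metis
    ultimately have "q = u @ (\<not> c) # q'" "r = u @ (\<not> c) # r'"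
      by simp_all
    moreover have "lcp q p = u" using u_def lcp_sym by metis
    ultimately have "strict_prefix (lcp q p) (lcp q r)" by (simp add: lcp_append strict_prefix_def)
    then show ?thesis using distinct by (simp add: resolved_def)
  qed (use distinct in \<open>simp_all add: resolved_def\<close>)
qed

definition clade_label :: "bool list \<Rightarrow> bool \<Rightarrow> bool list \<Rightarrow> abc" where
  "clade_label u b w =
     (if prefix (u @ [b]) w then A else if prefix (u @ [\<not> b]) w then B else C)"

lemma resolved_split:
  assumes "resolved p q r" "\<not> prefix p q" "\<not> prefix q p"
  obtains u c where "prefix (u @ [c]) p" "prefix (u @ [\<not> c]) q" "\<not> prefix u r"
proof -
  define u where "u = lcp p q"
  obtain c p' q' where p: "p = u @ c # p'" and q: "q = u @ (\<not> c) # q'"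
    unfolding u_def by (rule lcp_split[OF assms(2,3)])
  have "\<not> prefix u r"
  proof
    assume "prefix u r"
    then have "prefix u (lcp p r)"
      by (simp add: u_def prefix_lcp_iff longest_common_prefix_prefix1)
    then show False using assms(1) by (simp add: u_def resolved_def prefix_order.leD)
  qed
  moreover have "prefix (u @ [c]) p" "prefix (u @ [\<not> c]) q" using p q by simp_all
  ultimately show thesis using that by blast
qed

lemma resolved_across_clades:
  assumes "clade_label u b p \<noteq> C" "clade_label u b q \<noteq> C"
    and "clade_label u b p \<noteq> clade_label u b q" "clade_label u b r = C"
    and "\<not> strict_prefix r p"
  shows "resolved p q r"
proof -
  have "\<exists>c. prefix (u @ [c]) p \<and> prefix (u @ [\<not> c]) q"
    using assms(1-3) unfolding clade_label_def by (auto split: if_splits)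
  then obtain c p' q' where p: "p = u @ c # p'" and q: "q = u @ (\<not> c) # q'"
    by (auto simp: prefix_def)
  have lcp_pq: "lcp p q = u" using p q by (simp add: lcp_append)
  have "\<not> prefix u r"
  proof
    assume "prefix u r"
    then obtain rest where r: "r = u @ rest" by (auto simp: prefix_def)
    show False
    proof (cases rest)
      case Nil
      then show False using assms(5) p r by (simp add: strict_prefix_def)
    next
      case (Cons d rest')
      then show False using assms(4) r by (cases d; cases b) (simp_all add: clade_label_def)
    qed
  qed
  have "strict_prefix (lcp p r) u"
  proof -
    have "prefix u p" using p by simp
    moreover have "\<not> prefix u (lcp p r)" using \<open>\<not> prefix u r\<close> by (simp add: prefix_lcp_iff)
    ultimately show ?thesis
      using prefix_same_cases[OF longest_common_prefix_prefix1] by (auto simp: strict_prefix_def)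
  qed
  moreover have "p \<noteq> q" "p \<noteq> r" "q \<noteq> r" using assms(1-4) by auto
  ultimately show ?thesis using lcp_pq by (simp add: resolved_def)
qed

definition outgroup :: "(abc \<Rightarrow> bool list) \<Rightarrow> abc \<Rightarrow> bool" where
  "outgroup \<alpha> R \<longleftrightarrow> (\<exists>P Q. resolved (\<alpha> P) (\<alpha> Q) (\<alpha> R))"

lemma resolved_iff_outgroup:
  "resolved (\<alpha> P) (\<alpha> Q) (\<alpha> R) \<longleftrightarrow> P \<noteq> Q \<and> P \<noteq> R \<and> Q \<noteq> R \<and> outgroup \<alpha> R"
proof
  assume "resolved (\<alpha> P) (\<alpha> Q) (\<alpha> R)"
  then show "P \<noteq> Q \<and> P \<noteq> R \<and> Q \<noteq> R \<and> outgroup \<alpha> R"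
    unfolding outgroup_def resolved_def by blast
next
  assume distinct: "P \<noteq> Q \<and> P \<noteq> R \<and> Q \<noteq> R \<and> outgroup \<alpha> R"
  then obtain P' Q' where res: "resolved (\<alpha> P') (\<alpha> Q') (\<alpha> R)"
    unfolding outgroup_def by blast
  then have "P' \<noteq> Q'" "P' \<noteq> R" "Q' \<noteq> R" unfolding resolved_def by auto
  then have "(P, Q) = (P', Q') \<or> (P, Q) = (Q', P')"
    using distinct by (cases P; cases Q; cases R; cases P'; cases Q') simp_all
  then show "resolved (\<alpha> P) (\<alpha> Q) (\<alpha> R)" using res resolved_swap by auto
qed

lemma outgroup_unique:
  assumes "outgroup \<alpha> R" "outgroup \<alpha> R'"
  shows "R = R'"
proof (rule ccontr)
  assume "R \<noteq> R'"
  moreover obtain S where "S \<noteq> R" "S \<noteq> R'"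
    using abc.distinct by (cases R; cases R'; blast)
  ultimately have "resolved (\<alpha> S) (\<alpha> R') (\<alpha> R)" "resolved (\<alpha> S) (\<alpha> R) (\<alpha> R')"
    using assms resolved_iff_outgroup by auto
  then show False using resolved_asym by blast
qed

lemma yca_eq_lcp:
  assumes "rooted_tree T" "u \<in> T"
  shows "yca T u v = lcp u v"
proof -
  let ?common = "\<lambda>w. w \<in> T \<and> prefix w u \<and> prefix w v"
  have "?common (lcp u v)"
    using assms longest_common_prefix_prefix1 longest_common_prefix_prefix2
    unfolding rooted_tree_def by blast
  moreover have "\<forall>w. ?common w \<longrightarrow> length w < Suc (length (lcp u v))"
    by (simp add: prefix_length_le longest_common_prefix_max_prefix less_Suc_eq_le)
  ultimately have "?common (yca T u v)" "length (lcp u v) \<le> length (yca T u v)"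
    unfolding yca_def using arg_max_nat_lemma[of ?common] by blast+
  moreover have below: "prefix (yca T u v) (lcp u v)"
    using calculation(1) longest_common_prefix_max_prefix by blast
  ultimately have "prefix (lcp u v) (yca T u v)"
    using prefix_length_prefix[of "lcp u v" "lcp u v" "yca T u v"] by simp
  with below show ?thesis by (rule prefix_order.antisym)
qed

lemma sat_lit_iff_resolved:
  assumes "rooted_tree T" "\<alpha> x \<in> T"
  shows "sat_lit T \<alpha> (x, y, z) \<longleftrightarrow> resolved (\<alpha> x) (\<alpha> y) (\<alpha> z)"
proof -
  have "lcp (\<alpha> x) w \<in> T" for w
    using assms longest_common_prefix_prefix1 unfolding rooted_tree_def by blast
  then show ?thesis
    unfolding sat_lit_def resolved_def strictly_below_def strict_prefix_def
    by (auto simp add: yca_eq_lcp[OF assms])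
qed

lemma leaf_maximal:
  assumes "binary_tree T" "is_leaf T p" "v \<in> T" "prefix p v"
  shows "v = p"
proof (rule ccontr)
  assume "v \<noteq> p"
  then obtain b r where v: "v = p @ b # r"
    using assms(4) by (metis append_Nil2 neq_Nil_conv prefix_def)
  have tree: "rooted_tree T" using assms(1) by (simp add: binary_tree_def)
  then have child: "p @ [b] \<in> nbrs T p"
    using assms(3) v unfolding rooted_tree_def nbrs_def by auto
  have finite: "finite (nbrs T p)" using tree by (simp add: rooted_tree_def nbrs_def)
  show False
  proof (cases "p = []")
    case True
    then show False using assms(1,2) by (simp add: binary_tree_def is_leaf_def)
  next
    case False
    then have "p = butlast p @ [last p]" by simp
    moreover have "butlast p \<in> T"
      using tree assms(2) prefixeq_butlast unfolding rooted_tree_def is_leaf_def by blast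
    ultimately have parent: "butlast p \<in> nbrs T p" unfolding nbrs_def by blast
    have "length (butlast p) < length (p @ [b])" by simp
    then have "butlast p \<noteq> p @ [b]" by (metis less_irrefl)
    then have "2 \<le> card (nbrs T p)"
      using card_mono[OF finite, of "{butlast p, p @ [b]}"] child parent by simp
    then show False using assms(2) by (simp add: is_leaf_def)
  qed
qed

definition outgroups :: "'v clause \<Rightarrow> 'v set" where
  "outgroups \<chi> = {r. \<exists>p q. (p, q, r) \<in> set \<chi> \<and> p \<noteq> q \<and> p \<noteq> r \<and> q \<noteq> r}"

lemma outgroups_subst:
  assumes "inj \<pi>"
  shows "outgroups (subst_clause \<pi> \<chi>) = \<pi> ` outgroups \<chi>"
  using assms unfolding outgroups_def subst_clause_def by (force simp: inj_eq)

lemma subst_clause_comp: "subst_clause (\<pi> \<circ> \<sigma>) \<phi> = subst_clause \<pi> (subst_clause \<sigma> \<phi>)"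
  by (simp add: subst_clause_def case_prod_beta)

fun cycle3 :: "abc \<Rightarrow> abc" where
  "cycle3 A = C" | "cycle3 B = A" | "cycle3 C = B"

fun swap_AC :: "abc \<Rightarrow> abc" where
  "swap_AC A = C" | "swap_AC B = B" | "swap_AC C = A"

lemma inj_cycle3: "inj cycle3"
proof (rule injI)
  show "cycle3 x = cycle3 y \<Longrightarrow> x = y" for x y by (cases x; cases y) simp_all
qed

lemma inj_swap_AC: "inj swap_AC"
proof (rule injI)
  show "swap_AC x = swap_AC y \<Longrightarrow> x = y" for x y by (cases x; cases y) simp_all
qed

lemma sat_clause_iff_outgroups:
  fixes \<chi> :: "abc clause"
  assumes "rooted_tree T" "\<forall>v. \<alpha> v \<in> T"
  shows "sat_clause T \<alpha> \<chi> \<longleftrightarrow> (\<exists>R\<in>outgroups \<chi>. outgroup \<alpha> R)"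
proof -
  have lit: "sat_lit T \<alpha> (p, q, r) \<longleftrightarrow> p \<noteq> q \<and> p \<noteq> r \<and> q \<noteq> r \<and> outgroup \<alpha> r"
    for p q r using assms by (simp add: sat_lit_iff_resolved resolved_iff_outgroup)
  have "sat_clause T \<alpha> \<chi> \<longleftrightarrow> (\<exists>p q r. (p, q, r) \<in> set \<chi> \<and> sat_lit T \<alpha> (p, q, r))"
    unfolding sat_clause_def by auto
  also have "\<dots> \<longleftrightarrow> (\<exists>R\<in>outgroups \<chi>. outgroup \<alpha> R)"
    unfolding lit outgroups_def by blast
  finally show ?thesis .
qed

lemma relabelled_pair_iff_outgroup_C:
  fixes \<chi> :: "abc clause"
  assumes "outgroups \<chi> \<subseteq> {A, B}" "A \<in> outgroups \<chi>"
    and "rooted_tree T" "\<forall>v. \<alpha> v \<in> T"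
  shows "sat_clause T \<alpha> (subst_clause cycle3 \<chi>) \<and> sat_clause T \<alpha> (subst_clause swap_AC \<chi>)
    \<longleftrightarrow> outgroup \<alpha> C"
proof -
  note sat = sat_clause_iff_outgroups[OF assms(3,4)]
  have "outgroups (subst_clause cycle3 \<chi>) \<subseteq> {C, A}" "C \<in> outgroups (subst_clause cycle3 \<chi>)"
    using assms(1,2) unfolding outgroups_subst[OF inj_cycle3] by force+
  then have "outgroup \<alpha> C \<Longrightarrow> sat_clause T \<alpha> (subst_clause cycle3 \<chi>)"
    "sat_clause T \<alpha> (subst_clause cycle3 \<chi>) \<Longrightarrow> outgroup \<alpha> C \<or> outgroup \<alpha> A"
    unfolding sat by blast+
  moreover have "outgroups (subst_clause swap_AC \<chi>) \<subseteq> {C, B}"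
    "C \<in> outgroups (subst_clause swap_AC \<chi>)"
    using assms(1,2) unfolding outgroups_subst[OF inj_swap_AC] by force+
  then have "outgroup \<alpha> C \<Longrightarrow> sat_clause T \<alpha> (subst_clause swap_AC \<chi>)"
    "sat_clause T \<alpha> (subst_clause swap_AC \<chi>) \<Longrightarrow> outgroup \<alpha> C \<or> outgroup \<alpha> B"
    unfolding sat by blast+
  moreover have "\<not> (outgroup \<alpha> A \<and> outgroup \<alpha> B)"
    using outgroup_unique by blast
  ultimately show ?thesis by blast
qed

lemma unresolved_clause_labelling:
  fixes \<phi> :: "'v clause" and \<alpha> :: "'v \<Rightarrow> bool list"
  assumes "\<phi> \<noteq> []" "\<forall>(x, y, z)\<in>set \<phi>. x \<noteq> y \<and> x \<noteq> z \<and> y \<noteq> z"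
    and antichain: "\<And>v w. v \<in> clause_vars \<phi> \<Longrightarrow> w \<in> clause_vars \<phi> \<Longrightarrow>
      prefix (\<alpha> v) (\<alpha> w) \<Longrightarrow> v = w"
    and unresolved: "\<And>x y z. (x, y, z) \<in> set \<phi> \<Longrightarrow> \<not> resolved (\<alpha> x) (\<alpha> y) (\<alpha> z)"
  obtains \<sigma> :: "'v \<Rightarrow> abc"
  where "outgroups (subst_clause \<sigma> \<phi>) \<subseteq> {A, B}" "A \<in> outgroups (subst_clause \<sigma> \<phi>)"
proof -
  have vars: "x \<in> clause_vars \<phi> \<and> y \<in> clause_vars \<phi> \<and> z \<in> clause_vars \<phi>"
    if "(x, y, z) \<in> set \<phi>" for x y z
    using that unfolding clause_vars_def by blast
  obtain x y z where xyz: "(x, y, z) \<in> set \<phi>"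
    using assms(1) by (metis list.set_intros(1) neq_Nil_conv prod_cases3)
  then have "x \<noteq> y" "x \<noteq> z" "y \<noteq> z" using assms(2) by auto
  then have "resolved (\<alpha> z) (\<alpha> x) (\<alpha> y) \<or> resolved (\<alpha> z) (\<alpha> y) (\<alpha> x)"
    using resolved_trichotomy[of "\<alpha> x" "\<alpha> y" "\<alpha> z"] unresolved[OF xyz] antichain vars[OF xyz]
      resolved_swap by metis
  then obtain s t where st: "(s = x \<and> t = y) \<or> (s = y \<and> t = x)"
    and res: "resolved (\<alpha> z) (\<alpha> s) (\<alpha> t)" by blast
  have "\<not> prefix (\<alpha> z) (\<alpha> s)" "\<not> prefix (\<alpha> s) (\<alpha> z)"
    using antichain vars[OF xyz] st \<open>x \<noteq> z\<close> \<open>y \<noteq> z\<close> by metis+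
  then obtain u c where z: "prefix (u @ [c]) (\<alpha> z)" and s: "prefix (u @ [\<not> c]) (\<alpha> s)"
    and t: "\<not> prefix u (\<alpha> t)"
    using resolved_split[OF res] by blast
  have "\<not> prefix (u @ [b]) (\<alpha> t)" for b
    using t prefix_order.trans[of u "u @ [b]" "\<alpha> t"] by auto
  moreover have "\<not> prefix (u @ [c]) (\<alpha> s)" using s by (auto simp: prefix_def)
  ultimately have labels: "clade_label u c (\<alpha> z) = A" "clade_label u c (\<alpha> s) = B"
      "clade_label u c (\<alpha> t) = C"
    using z s unfolding clade_label_def by auto
  define \<sigma> where "\<sigma> = clade_label u c \<circ> \<alpha>"
  have "A \<in> outgroups (subst_clause \<sigma> \<phi>)"
    using xyz st labels unfolding outgroups_def subst_clause_def \<sigma>_def by force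
  moreover have "outgroups (subst_clause \<sigma> \<phi>) \<subseteq> {A, B}"
  proof
    fix R assume "R \<in> outgroups (subst_clause \<sigma> \<phi>)"
    then obtain a1 a2 a3 where lit: "(a1, a2, a3) \<in> set \<phi>" and R: "R = \<sigma> a3"
      and distinct: "\<sigma> a1 \<noteq> \<sigma> a2" "\<sigma> a1 \<noteq> \<sigma> a3" "\<sigma> a2 \<noteq> \<sigma> a3"
      unfolding outgroups_def subst_clause_def by auto
    have "\<not> strict_prefix (\<alpha> a3) (\<alpha> a1)"
      using antichain vars[OF lit] distinct(2) unfolding strict_prefix_def by metis
    then have "\<sigma> a3 \<noteq> C"
      using resolved_across_clades[of u c "\<alpha> a1" "\<alpha> a2" "\<alpha> a3"] unresolved[OF lit] distinct
      unfolding \<sigma>_def by auto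
    then show "R \<in> {A, B}" using R by (cases R) auto
  qed
  ultimately show thesis using that by blast
qed

lemma nontrivial_clause_counterexample:
  fixes \<phi> :: "'v clause"
  assumes "\<not> trivial_clause \<phi>"
  obtains \<alpha> :: "'v \<Rightarrow> bool list" where
    "\<And>v w. v \<in> clause_vars \<phi> \<Longrightarrow> w \<in> clause_vars \<phi> \<Longrightarrow>
      prefix (\<alpha> v) (\<alpha> w) \<Longrightarrow> v = w"
    "\<And>x y z. (x, y, z) \<in> set \<phi> \<Longrightarrow> \<not> resolved (\<alpha> x) (\<alpha> y) (\<alpha> z)"
proof -
  obtain T \<alpha> where binary: "binary_tree T" and inj: "inj_on \<alpha> (clause_vars \<phi>)"
    and leaves: "\<forall>x\<in>clause_vars \<phi>. is_leaf T (\<alpha> x)" and unsat: "\<not> sat_clause T \<alpha> \<phi>"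
    using assms unfolding trivial_clause_def by blast
  have tree: "rooted_tree T" using binary by (simp add: binary_tree_def)
  have in_tree: "\<alpha> v \<in> T" if "v \<in> clause_vars \<phi>" for v
    using leaves that by (simp add: is_leaf_def)
  have antichain: "v = w"
    if "v \<in> clause_vars \<phi>" "w \<in> clause_vars \<phi>" "prefix (\<alpha> v) (\<alpha> w)" for v w
  proof -
    have "\<alpha> w = \<alpha> v" using leaf_maximal[OF binary] leaves in_tree that by blast
    then show "v = w" using inj that by (metis inj_onD)
  qed
  have unresolved: "\<not> resolved (\<alpha> x) (\<alpha> y) (\<alpha> z)" if lit: "(x, y, z) \<in> set \<phi>" for x y z
  proof -
    have "x \<in> clause_vars \<phi>" using lit unfolding clause_vars_def by force
    have "sat_lit T \<alpha> (x, y, z) \<longleftrightarrow> resolved (\<alpha> x) (\<alpha> y) (\<alpha> z)"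
      by (rule sat_lit_iff_resolved[of T \<alpha> x, OF tree in_tree[OF \<open>x \<in> clause_vars \<phi>\<close>]])
    then show ?thesis using unsat lit unfolding sat_clause_def by blast
  qed
  show thesis by (rule that[of \<alpha>, OF antichain unresolved])
qed

theorem mainTheorem2:
  fixes \<phi> :: "'v clause"
  assumes "\<phi> \<noteq> []"
    and "\<forall>(x, y, z)\<in>set \<phi>. x \<noteq> y \<and> x \<noteq> z \<and> y \<noteq> z"
    and "\<not> trivial_clause \<phi>"
  shows "\<exists>\<sigma>s :: ('v \<Rightarrow> abc) list. \<sigma>s \<noteq> [] \<and>
           (\<forall>T (\<alpha> :: abc \<Rightarrow> bool list). binary_tree T \<longrightarrow> (\<forall>v. is_leaf T (\<alpha> v)) \<longrightarrow>
              ((\<forall>\<sigma>\<in>set \<sigma>s. sat_clause T \<alpha> (subst_clause \<sigma> \<phi>)) \<longleftrightarrow> sat_lit T \<alpha> (A, B, C)))"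
proof -
  obtain \<alpha>\<^sub>0 :: "'v \<Rightarrow> bool list" where
    antichain: "\<And>v w. v \<in> clause_vars \<phi> \<Longrightarrow> w \<in> clause_vars \<phi> \<Longrightarrow>
      prefix (\<alpha>\<^sub>0 v) (\<alpha>\<^sub>0 w) \<Longrightarrow> v = w"
    and unresolved: "\<And>x y z. (x, y, z) \<in> set \<phi> \<Longrightarrow> \<not> resolved (\<alpha>\<^sub>0 x) (\<alpha>\<^sub>0 y) (\<alpha>\<^sub>0 z)"
    using nontrivial_clause_counterexample[OF assms(3)] by blast
  obtain \<sigma>\<^sub>0 where outgroups: "outgroups (subst_clause \<sigma>\<^sub>0 \<phi>) \<subseteq> {A, B}"
    "A \<in> outgroups (subst_clause \<sigma>\<^sub>0 \<phi>)"
    using unresolved_clause_labelling[where \<alpha> = \<alpha>\<^sub>0, OF assms(1,2) antichain unresolved] by blast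
  show ?thesis
  proof (intro exI[of _ "[cycle3 \<circ> \<sigma>\<^sub>0, swap_AC \<circ> \<sigma>\<^sub>0]"] conjI allI impI)
    fix T and \<alpha> :: "abc \<Rightarrow> bool list"
    assume "binary_tree T" "\<forall>v. is_leaf T (\<alpha> v)"
    then have tree: "rooted_tree T" and in_tree: "\<forall>v. \<alpha> v \<in> T"
      by (simp_all add: binary_tree_def is_leaf_def)
    have "sat_lit T \<alpha> (A, B, C) \<longleftrightarrow> outgroup \<alpha> C"
      using in_tree by (simp add: sat_lit_iff_resolved[OF tree] resolved_iff_outgroup)
    then show "(\<forall>\<sigma>\<in>set [cycle3 \<circ> \<sigma>\<^sub>0, swap_AC \<circ> \<sigma>\<^sub>0]. sat_clause T \<alpha> (subst_clause \<sigma> \<phi>))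
        \<longleftrightarrow> sat_lit T \<alpha> (A, B, C)"
      using relabelled_pair_iff_outgroup_C[OF outgroups tree in_tree]
      by (simp add: subst_clause_comp)
  qed simp
qed

end
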